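(* Suppose $G$ has the form (PL) and (A6') holds. Then (A6) holds.
   Context: $\Theta\subseteq\mathbb R^m$ nonempty compact; $\mathbb P^Z$ a probability measure on $\mathcal B(\mathbb R^d)$. (PL): $G(\theta,z)=\sum_{i=1}^r\big(\min_{l\le s_i}\mathbb 1_{I_{il}}(L^i_l(T(\theta)+z)+a^i_l)\big)(\Lambda_i(T(\theta)+z)+b_i)$ with $r,s_i\in\mathbb N$, $a^i_l,b_i\in\mathbb R$, $\Lambda_i,L^i_l:\mathbb R^d\to\mathbb R$ and $T:\mathbb R^m\to\mathbb R^d$ linear, $]0,\infty[\subseteq I_{il}\subseteq[0,\infty[$, the $r$ min-indicator factors pairwise having zero product and summing to $1$ for all $(\theta,z)$. (A6'): for every $i\in\{1,\dots,r\}$ and $l\in\{1,\dots,s_i\}$ with $I_{il}=[0,\infty[$, the set $\{z\in\mathbb R^d: L^i_l(z)\in\{-L^i_l(T(\theta))-a^i_l:\theta\in\Theta\}\}$ is a $\mathbb P^Z$-null set. (A6): there exist an at most countable $\bar\Theta\subseteq\Theta$ and $(\mathbb P^Z)^{\otimes n}$-null sets $N_n\subseteq\mathbb R^{dn}$ ($n\in\mathbb N$) such that $\inf_{\vartheta\in\bar\Theta}\max_{j\le n}|G(\theta,z_j)-G(\vartheta,z_j)|=0$ for all $n$, $\theta\in\Theta$, $(z_1,\dots,z_n)\in\mathbb R^{dn}\setminus N_n$. *)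

theory Defs
  imports "HOL-Probability.Probability"
begin

definition PL_factor ::
  "(nat \<Rightarrow> nat) \<Rightarrow> (nat \<Rightarrow> nat \<Rightarrow> real set) \<Rightarrow> (nat \<Rightarrow> nat \<Rightarrow> 'd \<Rightarrow> real)
   \<Rightarrow> (nat \<Rightarrow> nat \<Rightarrow> real) \<Rightarrow> ('m \<Rightarrow> 'd::plus) \<Rightarrow> nat \<Rightarrow> 'm \<Rightarrow> 'd \<Rightarrow> real" where
  "PL_factor s I L a T i \<theta> z =
     Min ((\<lambda>l. indicator (I i l) (L i l (T \<theta> + z) + a i l)) ` {1..s i})"

end

theory Submission
  imports Defs
begin

text \<open>Call (\<theta>, z) degenerate if some constraint L(T \<theta> + z) + a \<in> I with I = [0,\<infinity>[ holds
  with equality; by (A6') the points z admitting a degenerate (\<theta>, z) with \<theta> \<in> \<Theta> form a null set.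
  At a nondegenerate (\<theta>, z) every constraint of the active piece holds strictly, so that piece
  stays active for parameters near \<theta>, and G(\<cdot>, z) is affine there, hence continuous at \<theta>.
  A countable dense subset of \<Theta> therefore approximates G(\<theta>, \<cdot>) simultaneously at finitely many
  sample points, unless a sample hits the null set.\<close>

lemma INF_Max_dist_eq_0_if_dense:
  fixes g :: "'i \<Rightarrow> 'a::metric_space \<Rightarrow> real"
  assumes "finite J" "J \<noteq> {}" "\<theta> \<in> \<Theta>" "D \<subseteq> \<Theta>" "\<Theta> \<subseteq> closure D"
    and cont: "\<And>j. j \<in> J \<Longrightarrow> continuous (at \<theta> within \<Theta>) (g j)"
  shows "(INF x\<in>D. Max ((\<lambda>j. \<bar>g j \<theta> - g j x\<bar>) ` J)) = 0"
proof -
  define h where "h x = Max ((\<lambda>j. \<bar>g j \<theta> - g j x\<bar>) ` J)" for x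
  have h_nonneg: "h x \<ge> 0" for x
    using assms(1,2) by (auto simp: h_def Max_ge_iff)
  have small: "\<exists>x\<in>D. h x < e" if "e > 0" for e
  proof -
    have "\<forall>\<^sub>F x in at \<theta> within D. \<forall>j\<in>J. dist (g j x) (g j \<theta>) < e"
    proof (intro eventually_ball_finite ballI \<open>finite J\<close>)
      fix j assume "j \<in> J"
      then have "continuous (at \<theta> within D) (g j)"
        using cont assms(4) by (blast intro: continuous_within_subset)
      then show "\<forall>\<^sub>F x in at \<theta> within D. dist (g j x) (g j \<theta>) < e"
        using \<open>e > 0\<close> by (auto simp: continuous_within tendsto_iff)
    qed
    then have ev: "\<forall>\<^sub>F x in at \<theta> within D. h x < e"
      by eventually_elim (use assms(1,2) in \<open>auto simp: h_def dist_real_def\<close>)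
    show ?thesis
    proof (cases "\<theta> \<in> D")
      case True
      then show ?thesis using \<open>e > 0\<close> assms(1,2) by (intro bexI[of _ \<theta>]) (auto simp: h_def)
    next
      case False
      then have "\<theta> islimpt D" using assms(3,5) by (auto simp: closure_def)
      then have "at \<theta> within D \<noteq> bot" by (simp add: trivial_limit_within)
      moreover have "\<forall>\<^sub>F x in at \<theta> within D. x \<in> D \<and> h x < e"
        using ev by (auto simp: eventually_at_filter elim: eventually_mono)
      ultimately show ?thesis by (auto dest: eventually_happens)
    qed
  qed
  have "D \<noteq> {}" using assms(3,5) by auto
  then have "(INF x\<in>D. h x) \<ge> 0" by (intro cINF_greatest h_nonneg)
  moreover have "\<not> (INF x\<in>D. h x) > 0"
  proof
    assume "(INF x\<in>D. h x) > 0"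
    then obtain x where "x \<in> D" "h x < (INF x\<in>D. h x)" using small by blast
    moreover have "bdd_below (h ` D)" using h_nonneg by (meson bdd_belowI2)
    ultimately show False using cINF_lower[of h D x] by linarith
  qed
  ultimately show ?thesis unfolding h_def by linarith
qed

lemma null_sets_PiM_Collect_ex:
  assumes "prob_space P" "finite J" "N \<in> null_sets P"
  shows "{zs \<in> space (PiM J (\<lambda>_. P)). \<exists>j\<in>J. zs j \<in> N} \<in> null_sets (PiM J (\<lambda>_. P))"
proof -
  interpret product_prob_space "\<lambda>_. P" J
    by (rule product_prob_spaceI) (rule assms(1))
  have "{zs \<in> space (PiM J (\<lambda>_. P)). \<exists>j\<in>J. zs j \<in> N}
      = (\<Union>j\<in>J. {zs \<in> space (PiM J (\<lambda>_. P)). zs j \<in> N})" by auto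
  also have "\<dots> \<in> null_sets (PiM J (\<lambda>_. P))"
  proof (intro null_sets_UN' countable_finite[OF assms(2)] null_setsI)
    fix j assume "j \<in> J"
    show "emeasure (PiM J (\<lambda>_. P)) {zs \<in> space (PiM J (\<lambda>_. P)). zs j \<in> N} = 0"
      using emeasure_PiM_Collect_single[OF \<open>j \<in> J\<close> null_setsD2[OF assms(3)]] null_setsD1[OF assms(3)]
      by simp
    show "{zs \<in> space (PiM J (\<lambda>_. P)). zs j \<in> N} \<in> sets (PiM J (\<lambda>_. P))"
      using \<open>j \<in> J\<close> null_setsD2[OF assms(3)] by (rule sets_Collect_single)
  qed
  finally show ?thesis .
qed

lemma PL_factor_eq:
  assumes "s i \<ge> 1"
  shows "PL_factor s I L a T i \<theta> z =
    (if \<forall>l\<in>{1..s i}. L i l (T \<theta> + z) + a i l \<in> I i l then 1 else 0)"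
proof -
  let ?vals = "(\<lambda>l. indicator (I i l) (L i l (T \<theta> + z) + a i l) :: real) ` {1..s i}"
  have ne: "?vals \<noteq> {}" "finite ?vals" using assms by auto
  show ?thesis
  proof (cases "\<forall>l\<in>{1..s i}. L i l (T \<theta> + z) + a i l \<in> I i l")
    case True
    then have "?vals = {1}" using ne by auto
    then show ?thesis using True by (simp add: PL_factor_def)
  next
    case False
    then have "0 \<in> ?vals" by (force simp: indicator_def)
    moreover have "?vals \<subseteq> {0, 1}" by (auto simp: indicator_def)
    ultimately have "Min ?vals = 0"
      using ne by (intro antisym Min_le) (auto simp: Min_ge_iff)
    then show ?thesis using False by (simp add: PL_factor_def)
  qed
qed

lemma sum_eq_1_imp_ex_eq_1:
  fixes F :: "'i \<Rightarrow> 'a::{comm_monoid_add, zero_neq_one}"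
  assumes "\<And>i. i \<in> K \<Longrightarrow> F i \<in> {0, 1}" "sum F K = 1"
  shows "\<exists>i\<in>K. F i = 1"
proof (rule ccontr)
  assume "\<not> ?thesis"
  with assms(1) have "sum F K = 0" by (intro sum.neutral) blast
  with assms(2) show False by simp
qed

lemma sum_mult_select:
  fixes F v :: "'i \<Rightarrow> 'a::semiring_1"
  assumes "finite K" "i \<in> K" "F i = 1" "\<And>j. j \<in> K \<Longrightarrow> j \<noteq> i \<Longrightarrow> F i * F j = 0"
  shows "(\<Sum>j\<in>K. F j * v j) = v i"
proof -
  have "(\<Sum>j\<in>K. F j * v j) = F i * v i + (\<Sum>j\<in>K - {i}. F j * v j)"
    using assms(1,2) by (rule sum.remove)
  also have "(\<Sum>j\<in>K - {i}. F j * v j) = 0"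
    using assms(3,4) by (intro sum.neutral) auto
  finally show ?thesis using assms(3) by simp
qed

lemma pos_if_mem_between_Ioi_Ici:
  fixes x :: real
  assumes "{0<..} \<subseteq> A" "A \<subseteq> {0..}" "x \<in> A" "A = {0..} \<Longrightarrow> x \<noteq> 0"
  shows "x > 0"
proof (rule ccontr)
  assume "\<not> x > 0"
  with assms(2,3) have "x = 0" by force
  with assms(1,2,3) have "A = {0..}" by (auto simp: less_eq_real_def)
  with assms(4) \<open>x = 0\<close> show False by blast
qed

locale PL_form =
  fixes \<Theta> :: "'p::euclidean_space set"
    and G :: "'p \<Rightarrow> 'x::euclidean_space \<Rightarrow> real"
    and r :: nat and s :: "nat \<Rightarrow> nat"
    and a :: "nat \<Rightarrow> nat \<Rightarrow> real" and b :: "nat \<Rightarrow> real"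
    and \<Lambda> :: "nat \<Rightarrow> 'x \<Rightarrow> real"
    and L :: "nat \<Rightarrow> nat \<Rightarrow> 'x \<Rightarrow> real"
    and T :: "'p \<Rightarrow> 'x"
    and I :: "nat \<Rightarrow> nat \<Rightarrow> real set"
  assumes s_pos: "\<And>i. i \<in> {1..r} \<Longrightarrow> s i \<ge> 1"
    and lin_T: "linear T"
    and lin_Lambda: "\<And>i. i \<in> {1..r} \<Longrightarrow> linear (\<Lambda> i)"
    and lin_L: "\<And>i l. i \<in> {1..r} \<Longrightarrow> l \<in> {1..s i} \<Longrightarrow> linear (L i l)"
    and I_bounds: "\<And>i l. i \<in> {1..r} \<Longrightarrow> l \<in> {1..s i} \<Longrightarrow> {0<..} \<subseteq> I i l \<and> I i l \<subseteq> {0..}"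
    and G_PL: "\<And>\<theta> z. \<theta> \<in> \<Theta> \<Longrightarrow>
        G \<theta> z = (\<Sum>i\<in>{1..r}. PL_factor s I L a T i \<theta> z * (\<Lambda> i (T \<theta> + z) + b i))"
    and factors_disj: "\<And>i j \<theta> z. i \<in> {1..r} \<Longrightarrow> j \<in> {1..r} \<Longrightarrow> i \<noteq> j \<Longrightarrow> \<theta> \<in> \<Theta> \<Longrightarrow>
        PL_factor s I L a T i \<theta> z * PL_factor s I L a T j \<theta> z = 0"
    and factors_sum: "\<And>\<theta> z. \<theta> \<in> \<Theta> \<Longrightarrow> (\<Sum>i\<in>{1..r}. PL_factor s I L a T i \<theta> z) = 1"
begin

abbreviation factor :: "nat \<Rightarrow> 'p \<Rightarrow> 'x \<Rightarrow> real" where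
  "factor \<equiv> PL_factor s I L a T"

definition nondegenerate :: "'p \<Rightarrow> 'x \<Rightarrow> bool" where
  "nondegenerate \<theta> z \<longleftrightarrow>
     (\<forall>i\<in>{1..r}. \<forall>l\<in>{1..s i}. I i l = {0..} \<longrightarrow> L i l (T \<theta> + z) + a i l \<noteq> 0)"

lemma active_piece_exists:
  assumes "\<theta> \<in> \<Theta>"
  shows "\<exists>i\<in>{1..r}. factor i \<theta> z = 1"
proof (rule sum_eq_1_imp_ex_eq_1)
  show "factor i \<theta> z \<in> {0, 1}" if "i \<in> {1..r}" for i
    using s_pos[OF that] by (simp add: PL_factor_eq)
  show "(\<Sum>i\<in>{1..r}. factor i \<theta> z) = 1"
    using assms by (rule factors_sum)
qed

lemma G_eq_active_piece:
  assumes "\<theta> \<in> \<Theta>" "i \<in> {1..r}" "factor i \<theta> z = 1"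
  shows "G \<theta> z = \<Lambda> i (T \<theta> + z) + b i"
proof -
  have "G \<theta> z = (\<Sum>j\<in>{1..r}. factor j \<theta> z * (\<Lambda> j (T \<theta> + z) + b j))"
    using assms(1) by (rule G_PL)
  also have "\<dots> = \<Lambda> i (T \<theta> + z) + b i"
    using assms by (intro sum_mult_select factors_disj) auto
  finally show ?thesis .
qed

lemma continuous_linear_shift:
  fixes f :: "'x \<Rightarrow> real"
  assumes "linear f"
  shows "continuous (at \<theta> within S) (\<lambda>y. f (T y + z))"
proof -
  have "bounded_linear f" "bounded_linear T"
    using assms lin_T by (simp_all add: linear_conv_bounded_linear)
  then show ?thesis
    by (intro bounded_linear.continuous[of f] continuous_add continuous_const
        bounded_linear.continuous[of T] continuous_ident)
qed

lemma active_piece_stable: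
  assumes i: "i \<in> {1..r}" and active: "factor i \<theta> z = 1" and "nondegenerate \<theta> z"
  shows "\<forall>\<^sub>F \<theta>' in at \<theta> within S. factor i \<theta>' z = 1"
proof -
  have "\<forall>\<^sub>F \<theta>' in at \<theta> within S. \<forall>l\<in>{1..s i}. L i l (T \<theta>' + z) + a i l > 0"
  proof (intro eventually_ball_finite finite_atLeastAtMost ballI)
    fix l assume l: "l \<in> {1..s i}"
    have "L i l (T \<theta> + z) + a i l \<in> I i l"
      using active l s_pos[OF i] by (simp add: PL_factor_eq split: if_splits)
    then have "L i l (T \<theta> + z) + a i l > 0"
      using I_bounds[OF i l] \<open>nondegenerate \<theta> z\<close> i l
      by (intro pos_if_mem_between_Ioi_Ici[of "I i l"]) (auto simp: nondegenerate_def)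
    moreover have "continuous (at \<theta> within S) (\<lambda>\<theta>'. L i l (T \<theta>' + z) + a i l)"
      by (intro continuous_add continuous_linear_shift lin_L i l continuous_const)
    then have "((\<lambda>\<theta>'. L i l (T \<theta>' + z) + a i l) \<longlongrightarrow> L i l (T \<theta> + z) + a i l) (at \<theta> within S)"
      by (simp add: continuous_within)
    ultimately show "\<forall>\<^sub>F \<theta>' in at \<theta> within S. L i l (T \<theta>' + z) + a i l > 0"
      by (rule order_tendstoD(1)[rotated])
  qed
  then show ?thesis
  proof eventually_elim
    case (elim \<theta>')
    then have "\<forall>l\<in>{1..s i}. L i l (T \<theta>' + z) + a i l \<in> I i l"
      using I_bounds[OF i] by fastforce
    then show ?case
      using s_pos[OF i] by (simp add: PL_factor_eq)
  qed
qed

lemma continuous_G: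
  assumes "\<theta> \<in> \<Theta>" "nondegenerate \<theta> z"
  shows "continuous (at \<theta> within \<Theta>) (\<lambda>\<theta>'. G \<theta>' z)"
proof -
  obtain i where i: "i \<in> {1..r}" "factor i \<theta> z = 1"
    using active_piece_exists[OF assms(1)] by blast
  have "\<forall>\<^sub>F \<theta>' in at \<theta> within \<Theta>. \<theta>' \<in> \<Theta>"
    by (simp add: eventually_at_filter)
  with active_piece_stable[OF i assms(2)]
  have "\<forall>\<^sub>F \<theta>' in at \<theta> within \<Theta>. \<Lambda> i (T \<theta>' + z) + b i = G \<theta>' z"
    by eventually_elim (use i G_eq_active_piece in auto)
  moreover have "continuous (at \<theta> within \<Theta>) (\<lambda>\<theta>'. \<Lambda> i (T \<theta>' + z) + b i)"
    by (intro continuous_add continuous_linear_shift lin_Lambda i continuous_const)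
  then have "((\<lambda>\<theta>'. \<Lambda> i (T \<theta>' + z) + b i) \<longlongrightarrow> G \<theta> z) (at \<theta> within \<Theta>)"
    by (simp add: continuous_within G_eq_active_piece[OF assms(1) i])
  ultimately show ?thesis
    by (simp add: continuous_within Lim_transform_eventually)
qed


lemma degenerate_set_eq:
  "{z. \<exists>\<theta>\<in>\<Theta>. \<not> nondegenerate \<theta> z} =
    (\<Union>i\<in>{1..r}. \<Union>l\<in>{l \<in> {1..s i}. I i l = {0..}}.
       {z. L i l z \<in> {- L i l (T \<theta>) - a i l | \<theta>. \<theta> \<in> \<Theta>}})"
proof -
  have "L i l (T \<theta> + z) + a i l = 0 \<longleftrightarrow> L i l z = - L i l (T \<theta>) - a i l"
    if "i \<in> {1..r}" "l \<in> {1..s i}" for i l \<theta> z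
    using linear_add[OF lin_L[OF that]] by auto
  then show ?thesis
    unfolding nondegenerate_def by fastforce
qed

lemma degenerate_set_null:
  assumes "\<And>i l. i \<in> {1..r} \<Longrightarrow> l \<in> {1..s i} \<Longrightarrow> I i l = {0..} \<Longrightarrow>
    {z. L i l z \<in> {- L i l (T \<theta>) - a i l | \<theta>. \<theta> \<in> \<Theta>}} \<in> null_sets P"
  shows "{z. \<exists>\<theta>\<in>\<Theta>. \<not> nondegenerate \<theta> z} \<in> null_sets P"
  unfolding degenerate_set_eq
  using assms by (intro null_sets_UN' countable_finite) auto
end

theorem lemma6p3:
  fixes \<Theta> :: "(real^'m) set"
    and P :: "(real^'d) measure"
    and G :: "real^'m \<Rightarrow> real^'d \<Rightarrow> real"
    and r :: nat and s :: "nat \<Rightarrow> nat"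
    and a :: "nat \<Rightarrow> nat \<Rightarrow> real" and b :: "nat \<Rightarrow> real"
    and \<Lambda> :: "nat \<Rightarrow> real^'d \<Rightarrow> real"
    and L :: "nat \<Rightarrow> nat \<Rightarrow> real^'d \<Rightarrow> real"
    and T :: "real^'m \<Rightarrow> real^'d"
    and I :: "nat \<Rightarrow> nat \<Rightarrow> real set"
  assumes Theta: "compact \<Theta>" "\<Theta> \<noteq> {}"
    and P: "prob_space P" "sets P = sets borel"
    and r_pos: "r \<ge> 1" and s_pos: "\<And>i. i \<in> {1..r} \<Longrightarrow> s i \<ge> 1"
    and lin_T: "linear T"
    and lin_Lambda: "\<And>i. i \<in> {1..r} \<Longrightarrow> linear (\<Lambda> i)"
    and lin_L: "\<And>i l. i \<in> {1..r} \<Longrightarrow> l \<in> {1..s i} \<Longrightarrow> linear (L i l)"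
    and I_bounds: "\<And>i l. i \<in> {1..r} \<Longrightarrow> l \<in> {1..s i} \<Longrightarrow> {0<..} \<subseteq> I i l \<and> I i l \<subseteq> {0..}"
    and G_PL: "\<And>\<theta> z. \<theta> \<in> \<Theta> \<Longrightarrow>
        G \<theta> z = (\<Sum>i\<in>{1..r}. PL_factor s I L a T i \<theta> z * (\<Lambda> i (T \<theta> + z) + b i))"
    and factors_disj: "\<And>i j \<theta> z. i \<in> {1..r} \<Longrightarrow> j \<in> {1..r} \<Longrightarrow> i \<noteq> j \<Longrightarrow> \<theta> \<in> \<Theta> \<Longrightarrow>
        PL_factor s I L a T i \<theta> z * PL_factor s I L a T j \<theta> z = 0"
    and factors_sum: "\<And>\<theta> z. \<theta> \<in> \<Theta> \<Longrightarrow> (\<Sum>i\<in>{1..r}. PL_factor s I L a T i \<theta> z) = 1"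
    and A6': "\<And>i l. i \<in> {1..r} \<Longrightarrow> l \<in> {1..s i} \<Longrightarrow> I i l = {0..} \<Longrightarrow>
        {z. L i l z \<in> {- L i l (T \<theta>) - a i l | \<theta>. \<theta> \<in> \<Theta>}} \<in> null_sets P"
  shows "\<exists>\<Theta>' (N :: nat \<Rightarrow> (nat \<Rightarrow> real^'d) set). countable \<Theta>' \<and> \<Theta>' \<subseteq> \<Theta> \<and>
     (\<forall>n\<ge>1. N n \<in> null_sets (PiM {1..n} (\<lambda>_. P))) \<and>
     (\<forall>n\<ge>1. \<forall>\<theta>\<in>\<Theta>. \<forall>zs \<in> space (PiM {1..n} (\<lambda>_. P)) - N n.
        (INF \<theta>'\<in>\<Theta>'. Max ((\<lambda>j. \<bar>G \<theta> (zs j) - G \<theta>' (zs j)\<bar>) ` {1..n})) = 0)"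
proof -
  interpret PL_form \<Theta> G r s a b \<Lambda> L T I
    using s_pos lin_T lin_Lambda lin_L I_bounds G_PL factors_disj factors_sum
    by (rule PL_form.intro)
  define Z where "Z = {z. \<exists>\<theta>\<in>\<Theta>. \<not> nondegenerate \<theta> z}"
  have Z_null: "Z \<in> null_sets P"
    unfolding Z_def using A6' by (rule degenerate_set_null)
  obtain D where D: "countable D" "D \<subseteq> \<Theta>" "\<Theta> \<subseteq> closure D"
    by (rule separable)
  define N where "N n = {zs \<in> space (PiM {1..n} (\<lambda>_. P)). \<exists>j\<in>{1..n}. zs j \<in> Z}" for n :: nat
  show ?thesis
  proof (intro exI[of _ D] exI[of _ N] conjI allI impI ballI)
    fix n :: nat assume "n \<ge> 1"
    show "N n \<in> null_sets (PiM {1..n} (\<lambda>_. P))"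
      unfolding N_def using P(1) finite_atLeastAtMost Z_null by (rule null_sets_PiM_Collect_ex)
    fix \<theta> zs assume "\<theta> \<in> \<Theta>" "zs \<in> space (PiM {1..n} (\<lambda>_. P)) - N n"
    then have "nondegenerate \<theta> (zs j)" if "j \<in> {1..n}" for j
      using that by (auto simp: N_def Z_def)
    then show "(INF \<theta>'\<in>D. Max ((\<lambda>j. \<bar>G \<theta> (zs j) - G \<theta>' (zs j)\<bar>) ` {1..n})) = 0"
      using \<open>n \<ge> 1\<close> \<open>\<theta> \<in> \<Theta>\<close> D(2,3)
      by (intro INF_Max_dist_eq_0_if_dense) (auto intro: continuous_G)
  qed (use D in auto)
qed

end
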